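(* Let $(\Omega,\Sigma,\mu)$ be a probability space, let $\|\cdot\|$ be the Luxemburg norm on $L^1(\mu)$ associated to $M$ (defined in the context), and let $X$ be a closed subspace of $L^1(\mu)$. Then for every $\tau>0$, $$\rho_X(\tau)\le 128\,\sup\Big\{\int_\Omega M(\tau g)\,d\mu : g\in X,\ \|g\|_1=1\Big\}.$$
   Context: Let $\varphi(t)=2$ for $0\le t\le1$ and $\varphi(t)=8/(1+t)^2$ for $t>1$, and let $M(t)=\int_0^{|t|}\varphi(u)(|t|-u)\,du$. The Luxemburg norm is $\|f\|=\inf\{\lambda>0:\int_\Omega M(f/\lambda)\,d\mu\le1\}$. The modulus of smoothness of $(X,\|\cdot\|)$ is $\rho_X(\tau)=\sup\{\tfrac{\|x+\tau y\|+\|x-\tau y\|}{2}-1 : x,y\in X,\ \|x\|=\|y\|=1\}$. *)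

theory Defs
  imports "HOL-Probability.Probability"
begin

definition phi :: "real \<Rightarrow> real" where
  "phi t = (if t \<le> 1 then 2 else 8 / (1 + t)^2)"

definition orliczM :: "real \<Rightarrow> real" where
  "orliczM t = integral {0..\<bar>t\<bar>} (\<lambda>u. phi u * (\<bar>t\<bar> - u))"

definition lux_norm :: "'a measure \<Rightarrow> ('a \<Rightarrow> real) \<Rightarrow> real" where
  "lux_norm mu f = Inf {lam. lam > 0 \<and> (\<integral>\<^sup>+ w. ennreal (orliczM (f w / lam)) \<partial>mu) \<le> 1}"

definition l1_norm :: "'a measure \<Rightarrow> ('a \<Rightarrow> real) \<Rightarrow> real" where
  "l1_norm mu g = (\<integral> w. \<bar>g w\<bar> \<partial>mu)"

text \<open>A closed linear subspace of L^1(mu), represented as a set of integrable functions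
  (closed under L^1 limits, hence in particular a union of a.e.-classes).\<close>
definition closed_L1_subspace :: "'a measure \<Rightarrow> ('a \<Rightarrow> real) set \<Rightarrow> bool" where
  "closed_L1_subspace mu X \<longleftrightarrow>
     (\<forall>f\<in>X. integrable mu f) \<and> (\<lambda>w. 0) \<in> X \<and>
     (\<forall>f\<in>X. \<forall>g\<in>X. (\<lambda>w. f w + g w) \<in> X) \<and>
     (\<forall>f\<in>X. \<forall>c::real. (\<lambda>w. c * f w) \<in> X) \<and>
     (\<forall>F g. (\<forall>n. F n \<in> X) \<longrightarrow> integrable mu g \<longrightarrow>
        ((\<lambda>n. \<integral> w. \<bar>F n w - g w\<bar> \<partial>mu) \<longlonglongrightarrow> 0) \<longrightarrow> g \<in> X)"

text \<open>Modulus of smoothness of (X, Luxemburg norm); supremum taken in ereal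
  (so the empty supremum, for X = {0}, is -infinity).\<close>
definition mod_smooth :: "'a measure \<Rightarrow> ('a \<Rightarrow> real) set \<Rightarrow> real \<Rightarrow> ereal" where
  "mod_smooth mu X tau = (SUP p \<in> {(x, y). x \<in> X \<and> y \<in> X \<and> lux_norm mu x = 1 \<and> lux_norm mu y = 1}.
      ereal ((lux_norm mu (\<lambda>w. fst p w + tau * snd p w)
            + lux_norm mu (\<lambda>w. fst p w - tau * snd p w)) / 2 - 1))"

end

theory Submission
  imports Defs
begin

text \<open>
  Integrating twice gives the closed form \<open>M(t) = t\<^sup>2\<close> for \<open>|t| \<le> 1\<close> and
  \<open>M(t) = 6|t| - 5 - 8 ln((1+|t|)/2)\<close> otherwise; its derivative \<open>M'\<close> is nondecreasing,
  2-Lipschitz and bounded by 6, and \<open>M''(t) = \<phi>(|t|)\<close>.  From this we get, pointwise: convexity,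
  the second-order estimate \<open>M(a+b) \<le> M(a) + b M'(a) + 12 M(b)\<close> and the quadratic growth
  bound \<open>M(kt) \<le> k\<^sup>2 M(t)\<close> for \<open>k \<ge> 1\<close>.

  Integrating these, with \<open>I(f) = \<integral> M(f)\<close> the modular: on a probability space the Luxemburg unit
  sphere is \<open>{I = 1}\<close>, and \<open>I(f) = 1\<close> implies \<open>0 < \<parallel>f\<parallel>\<^sub>1 \<le> 1\<close>.  For \<open>I(x) = I(y) = 1\<close> and
  \<open>s \<ge> I(\<tau>x), I(\<tau>y)\<close>, testing \<open>\<lambda> = 1 + \<tau>L/P + 128s\<close> with \<open>P = \<integral> x M'(x)\<close>,
  \<open>L = \<integral> y M'(x)\<close> shows \<open>\<parallel>x \<plusminus> \<tau>y\<parallel> \<le> 1 \<plusminus> \<tau>L/P + 128s\<close> when \<open>128s < \<tau>\<close>; otherwise the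
  crude bound \<open>\<parallel>x \<plusminus> \<tau>y\<parallel> \<le> 1 + \<tau>\<close> suffices.  Finally, normalising \<open>x\<close> in \<open>L\<^sup>1\<close> can only increase
  \<open>I(\<tau>x)\<close>, which bounds \<open>s\<close> by the supremum in the statement.
\<close>

definition Mc :: "real \<Rightarrow> real" where
  "Mc t = (if \<bar>t\<bar> \<le> 1 then t^2 else 6 * \<bar>t\<bar> - 5 - 8 * ln ((1 + \<bar>t\<bar>) / 2))"

definition dMc :: "real \<Rightarrow> real" where
  "dMc t = (if \<bar>t\<bar> \<le> 1 then 2 * t else sgn t * (6 - 8 / (1 + \<bar>t\<bar>)))"

lemma has_real_derivative_local:
  fixes f g :: "real \<Rightarrow> real"
  assumes "(g has_real_derivative D) (at x)" "open S" "x \<in> S" "\<And>y. y \<in> S \<Longrightarrow> f y = g y"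
    and "D = E"
  shows "(f has_real_derivative E) (at x)"
  using has_field_derivative_transform_within_open[of g D x S f] assms by auto

lemma has_real_derivative_glue:
  fixes f g h :: "real \<Rightarrow> real"
  assumes "(g has_real_derivative D) (at x)" and "(h has_real_derivative D') (at x)"
    and left: "\<And>y. x - 1 < y \<Longrightarrow> y \<le> x \<Longrightarrow> f y = g y"
    and right: "\<And>y. x \<le> y \<Longrightarrow> y < x + 1 \<Longrightarrow> f y = h y"
    and "D = E" "D' = E"
  shows "(f has_real_derivative E) (at x)"
proof -
  have g: "(g has_real_derivative E) (at x)" and h: "(h has_real_derivative E) (at x)"
    using assms(1,2,5,6) by simp_all
  have "(f has_real_derivative E) (at x within {..x})"
    by (rule has_field_derivative_transform_within[OF has_field_derivative_at_within[OF g], of 1])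
      (use left in \<open>auto simp: dist_real_def\<close>)
  moreover have "(f has_real_derivative E) (at x within {x..})"
    by (rule has_field_derivative_transform_within[OF has_field_derivative_at_within[OF h], of 1])
      (use right in \<open>auto simp: dist_real_def\<close>)
  moreover have "{..x} \<union> {x..} = UNIV" by auto
  then have "at x = sup (at x within {..x}) (at x within {x..})"
    unfolding at_within_union[symmetric] by simp
  ultimately show ?thesis
    unfolding has_field_derivative_iff by (metis filterlim_sup)
qed

lemma Mc_deriv: "(Mc has_real_derivative dMc t) (at t)"
proof -
  have sq: "((\<lambda>s. s^2) has_real_derivative 2 * t) (at t)" for t
    by (auto intro!: derivative_eq_intros)
  have pos: "((\<lambda>s. 6 * s - 5 - 8 * ln ((1 + s) / 2)) has_real_derivative 6 - 8 / (1 + t)) (at t)"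
    if "t > -1" for t
    using that by (auto intro!: derivative_eq_intros simp: field_simps)
  have neg: "((\<lambda>s. -6 * s - 5 - 8 * ln ((1 - s) / 2)) has_real_derivative -6 + 8 / (1 - t)) (at t)"
    if "t < 1" for t
    using that by (auto intro!: derivative_eq_intros simp: field_simps)
  consider "\<bar>t\<bar> < 1" | "t > 1" | "t < -1" | "t = 1" | "t = -1" by linarith
  then show ?thesis
  proof cases
    case 1
    show ?thesis by (rule has_real_derivative_local[OF sq, where S="{-1<..<1}"])
        (use 1 in \<open>auto simp: Mc_def dMc_def\<close>)
  next
    case 2
    show ?thesis by (rule has_real_derivative_local[OF pos, where S="{1<..}"])
        (use 2 in \<open>auto simp: Mc_def dMc_def\<close>)
  next
    case 3
    show ?thesis by (rule has_real_derivative_local[OF neg, where S="{..<-1}"])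
        (use 3 in \<open>auto simp: Mc_def dMc_def\<close>)
  next
    case 4
    show ?thesis by (rule has_real_derivative_glue[OF sq pos]) (use 4 in \<open>auto simp: Mc_def dMc_def\<close>)
  next
    case 5
    show ?thesis by (rule has_real_derivative_glue[OF neg sq]) (use 5 in \<open>auto simp: Mc_def dMc_def\<close>)
  qed
qed

lemma dMc_deriv: "(dMc has_real_derivative phi \<bar>t\<bar>) (at t)"
proof -
  have lin: "((\<lambda>s. 2 * s) has_real_derivative 2) (at t)" for t
    by (auto intro!: derivative_eq_intros)
  have pos: "((\<lambda>s. 6 - 8 / (1 + s)) has_real_derivative 8 / (1 + t)^2) (at t)" if "t > -1" for t
    using that by (auto intro!: derivative_eq_intros simp: field_simps power2_eq_square)
  have neg: "((\<lambda>s. -6 + 8 / (1 - s)) has_real_derivative 8 / (1 - t)^2) (at t)" if "t < 1" for t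
    using that by (auto intro!: derivative_eq_intros simp: field_simps power2_eq_square)
  consider "\<bar>t\<bar> < 1" | "t > 1" | "t < -1" | "t = 1" | "t = -1" by linarith
  then show ?thesis
  proof cases
    case 1
    show ?thesis by (rule has_real_derivative_local[OF lin, where S="{-1<..<1}"])
        (use 1 in \<open>auto simp: phi_def dMc_def\<close>)
  next
    case 2
    show ?thesis by (rule has_real_derivative_local[OF pos, where S="{1<..}"])
        (use 2 in \<open>auto simp: phi_def dMc_def\<close>)
  next
    case 3
    show ?thesis by (rule has_real_derivative_local[OF neg, where S="{..<-1}"])
        (use 3 in \<open>auto simp: phi_def dMc_def\<close>)
  next
    case 4
    show ?thesis by (rule has_real_derivative_glue[OF lin pos]) (use 4 in \<open>auto simp: phi_def dMc_def\<close>)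
  next
    case 5
    show ?thesis by (rule has_real_derivative_glue[OF neg lin]) (use 5 in \<open>auto simp: phi_def dMc_def\<close>)
  qed
qed

lemma orliczM_eq_Mc: "orliczM t = Mc t"
proof -
  define T where "T = \<bar>t\<bar>"
  define g where "g u = phi u * (T - u)" for u
  have oM: "orliczM t = integral {0..T} g" unfolding orliczM_def T_def g_def by simp
  define F1 where "F1 u = 2 * T * u - u^2" for u
  have F1_deriv: "(F1 has_vector_derivative g u) (at u within S)" if "u \<le> 1" for u S
  proof -
    have "(F1 has_real_derivative 2 * T - 2 * u) (at u)"
      unfolding F1_def by (auto intro!: derivative_eq_intros)
    moreover have "2 * T - 2 * u = g u" using that by (simp add: g_def phi_def algebra_simps)
    ultimately show ?thesis
      by (simp add: has_real_derivative_iff_has_vector_derivative[symmetric] has_field_derivative_at_within)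
  qed
  show ?thesis
  proof (cases "T \<le> 1")
    case True
    have "(g has_integral (F1 T - F1 0)) {0..T}"
      by (rule fundamental_theorem_of_calculus) (use True F1_deriv in \<open>auto simp: T_def\<close>)
    then have "integral {0..T} g = T^2" by (simp add: integral_unique F1_def power2_eq_square)
    then show ?thesis using True by (simp add: oM Mc_def T_def)
  next
    case False
    define F2 where "F2 u = - 8 * (T + 1) / (1 + u) - 8 * ln (1 + u)" for u
    have F2_deriv: "(F2 has_vector_derivative g u) (at u within S)" if "1 \<le> u" for u S
    proof -
      have "(F2 has_real_derivative 8 * (T + 1) / (1 + u)^2 - 8 / (1 + u)) (at u)"
        unfolding F2_def using that by (auto intro!: derivative_eq_intros simp: field_simps power2_eq_square)
      moreover have "phi u = 8 / (1 + u)^2" using that by (cases "u = 1") (auto simp: phi_def)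
      moreover have "8 * (T + 1) / (1 + u)^2 - 8 / (1 + u) = 8 / (1 + u)^2 * (T - u)"
        using that by (simp add: divide_simps power2_eq_square)
      ultimately have "(F2 has_real_derivative g u) (at u)" by (simp add: g_def)
      then show ?thesis
        by (simp add: has_real_derivative_iff_has_vector_derivative[symmetric] has_field_derivative_at_within)
    qed
    have "(g has_integral (F1 1 - F1 0)) {0..1}"
      by (rule fundamental_theorem_of_calculus) (use F1_deriv in auto)
    moreover have "(g has_integral (F2 T - F2 1)) {1..T}"
      by (rule fundamental_theorem_of_calculus) (use False F2_deriv in auto)
    ultimately have "(g has_integral ((F1 1 - F1 0) + (F2 T - F2 1))) {0..T}"
      by (rule has_integral_combine[rotated 2]) (use False in auto)
    then have "integral {0..T} g = (F1 1 - F1 0) + (F2 T - F2 1)" by (rule integral_unique)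
    also have "\<dots> = 6 * T - 5 - 8 * ln ((1 + T) / 2)"
      using False by (simp add: F1_def F2_def ln_div field_simps)
    finally show ?thesis using False by (simp add: oM Mc_def T_def)
  qed
qed

text \<open>Basic properties of \<open>M\<close> and \<open>M'\<close>; the bounds \<open>0 \<le> \<phi> \<le> 2\<close> make \<open>M'\<close> monotone and 2-Lipschitz.\<close>

lemma phi_bounds: "0 \<le> phi u" "phi u \<le> 2"
proof -
  show "0 \<le> phi u" by (simp add: phi_def)
  have "8 / (1 + u)^2 \<le> 2" if "u > 1"
  proof -
    have "(2::real)^2 \<le> (1 + u)^2" using that by (intro power_mono) auto
    then show ?thesis by (simp add: divide_le_eq)
  qed
  then show "phi u \<le> 2" by (auto simp: phi_def)
qed

lemma dMc_mono: "s \<le> t \<Longrightarrow> dMc s \<le> dMc t"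
  by (rule DERIV_nonneg_imp_nondecreasing[of s t dMc]) (use dMc_deriv phi_bounds in blast)+

lemma dMc_lipschitz: "\<bar>dMc s - dMc t\<bar> \<le> 2 * \<bar>s - t\<bar>"
proof -
  have *: "\<bar>dMc t - dMc s\<bar> \<le> 2 * (t - s)" if "s < t" for s t
  proof -
    obtain z where "dMc t - dMc s = (t - s) * phi \<bar>z\<bar>"
      using MVT2[OF \<open>s < t\<close>, of dMc "\<lambda>z. phi \<bar>z\<bar>"] dMc_deriv by blast
    moreover have "(t - s) * phi \<bar>z\<bar> \<le> (t - s) * 2"
      using phi_bounds(2) \<open>s < t\<close> by (intro mult_left_mono) auto
    ultimately show ?thesis using phi_bounds(1)[of "\<bar>z\<bar>"] \<open>s < t\<close> by (simp add: abs_mult)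
  qed
  consider "s < t" | "s = t" | "t < s" by linarith
  then show ?thesis by cases (use *[of s t] *[of t s] in \<open>auto simp: abs_minus_commute\<close>)
qed

lemma dMc_bound: "\<bar>dMc t\<bar> \<le> 6"
proof (cases "\<bar>t\<bar> \<le> 1")
  case True then show ?thesis by (simp add: dMc_def)
next
  case False
  then have "0 < 8 / (1 + \<bar>t\<bar>)" "8 / (1 + \<bar>t\<bar>) \<le> 4" by (auto simp: divide_le_eq)
  then have "\<bar>6 - 8 / (1 + \<bar>t\<bar>)\<bar> \<le> 6" by linarith
  then show ?thesis using False by (simp add: dMc_def abs_mult abs_sgn_eq split: if_split_asm)
qed

lemma Mc_minus [simp]: "Mc (- t) = Mc t" by (simp add: Mc_def)

lemma Mc_abs: "Mc \<bar>t\<bar> = Mc t" by (simp add: Mc_def)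

lemma Mc_zero [simp]: "Mc 0 = 0" by (simp add: Mc_def)

lemma Mc_lower: "2 * \<bar>t\<bar> - 1 \<le> Mc t"
proof (cases "\<bar>t\<bar> \<le> 1")
  case True
  have "0 \<le> (\<bar>t\<bar> - 1)^2" by simp
  then show ?thesis using True by (simp add: Mc_def power2_eq_square algebra_simps)
next
  case False
  have "ln ((1 + \<bar>t\<bar>) / 2) \<le> (1 + \<bar>t\<bar>) / 2 - 1" by (rule ln_le_minus_one) (use False in auto)
  then show ?thesis using False by (simp add: Mc_def)
qed

lemma Mc_nonneg: "0 \<le> Mc t"
  using Mc_lower[of t] by (cases "\<bar>t\<bar> \<le> 1") (auto simp: Mc_def)

lemma Mc_upper: "Mc t \<le> 6 * \<bar>t\<bar>"
proof (cases "\<bar>t\<bar> \<le> 1")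
  case True
  then have "\<bar>t\<bar> * \<bar>t\<bar> \<le> \<bar>t\<bar> * 1" by (intro mult_left_mono) auto
  then show ?thesis using True by (simp add: Mc_def power2_eq_square)
next
  case False
  then have "0 \<le> ln ((1 + \<bar>t\<bar>) / 2)" by simp
  moreover have "Mc t = 6 * \<bar>t\<bar> - 5 - 8 * ln ((1 + \<bar>t\<bar>) / 2)" using False by (simp add: Mc_def)
  ultimately show ?thesis by linarith
qed

lemma Mc_mvt: "\<exists>z. Mc b - Mc a = (b - a) * dMc z \<and> min a b \<le> z \<and> z \<le> max a b"
proof -
  consider "a < b" | "a = b" | "b < a" by linarith
  then show ?thesis
  proof cases
    case 1
    then obtain z where "a < z" "z < b" "Mc b - Mc a = (b - a) * dMc z"
      using MVT2[OF 1, of Mc dMc] Mc_deriv by blast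
    then show ?thesis by (intro exI[of _ z]) auto
  next
    case 3
    then obtain z where "b < z" "z < a" "Mc a - Mc b = (a - b) * dMc z"
      using MVT2[OF 3, of Mc dMc] Mc_deriv by blast
    then show ?thesis by (intro exI[of _ z]) (auto simp: algebra_simps)
  qed auto
qed

lemma Mc_tangent: "Mc a + (b - a) * dMc a \<le> Mc b"
proof -
  obtain z where z: "Mc b - Mc a = (b - a) * dMc z" "min a b \<le> z" "z \<le> max a b"
    using Mc_mvt by blast
  have "(b - a) * dMc a \<le> (b - a) * dMc z"
  proof (cases "a \<le> b")
    case True
    then show ?thesis using z dMc_mono[of a z] by (intro mult_left_mono) auto
  next
    case False
    then show ?thesis using z dMc_mono[of z a] by (intro mult_left_mono_neg) auto
  qed
  then show ?thesis using z by linarith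
qed

lemma Mc_convex:
  assumes "0 \<le> th" "th \<le> 1"
  shows "Mc (th * a + (1 - th) * b) \<le> th * Mc a + (1 - th) * Mc b"
proof -
  define c where "c = th * a + (1 - th) * b"
  have "th * (Mc c + (a - c) * dMc c) + (1 - th) * (Mc c + (b - c) * dMc c) \<le> th * Mc a + (1 - th) * Mc b"
    using Mc_tangent[of c a] Mc_tangent[of c b] assms by (intro add_mono mult_left_mono) auto
  moreover have "th * (Mc c + (a - c) * dMc c) + (1 - th) * (Mc c + (b - c) * dMc c) = Mc c"
    unfolding c_def by (simp add: algebra_simps)
  ultimately show ?thesis unfolding c_def by simp
qed

lemma Mc_mono_abs:
  assumes "\<bar>s\<bar> \<le> \<bar>t\<bar>" shows "Mc s \<le> Mc t"
proof -
  have "0 \<le> dMc \<bar>s\<bar>" using dMc_mono[of 0 "\<bar>s\<bar>"] by (simp add: dMc_def)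
  then have "Mc \<bar>s\<bar> \<le> Mc \<bar>s\<bar> + (\<bar>t\<bar> - \<bar>s\<bar>) * dMc \<bar>s\<bar>" using assms by simp
  also have "\<dots> \<le> Mc \<bar>t\<bar>" by (rule Mc_tangent)
  finally show ?thesis by (simp add: Mc_abs)
qed

text \<open>Second-order Taylor estimate: the remainder is at most \<open>min(2b\<^sup>2, 12|b|) \<le> 12 M(b)\<close>.\<close>

lemma Mc_remainder: "Mc (a + b) \<le> Mc a + b * dMc a + 12 * Mc b"
proof -
  obtain z where mvt: "Mc (a + b) - Mc a = (a + b - a) * dMc z"
    and between: "min a (a + b) \<le> z" "z \<le> max a (a + b)"
    using Mc_mvt by blast
  have z: "Mc (a + b) - Mc a = b * dMc z" "\<bar>z - a\<bar> \<le> \<bar>b\<bar>" using mvt between by auto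
  have "b * (dMc z - dMc a) \<le> \<bar>b\<bar> * \<bar>dMc z - dMc a\<bar>" by (simp add: abs_mult[symmetric])
  moreover have "\<bar>b\<bar> * \<bar>dMc z - dMc a\<bar> \<le> \<bar>b\<bar> * (2 * \<bar>b\<bar>)"
    using dMc_lipschitz[of z a] z(2) by (intro mult_left_mono) auto
  moreover have "\<bar>b\<bar> * (2 * \<bar>b\<bar>) = 2 * b^2" by (simp add: power2_eq_square abs_mult_self_eq)
  moreover have "\<bar>b\<bar> * \<bar>dMc z - dMc a\<bar> \<le> \<bar>b\<bar> * 12"
    using dMc_bound[of z] dMc_bound[of a] by (intro mult_left_mono) auto
  ultimately have "b * (dMc z - dMc a) \<le> min (2 * b^2) (12 * \<bar>b\<bar>)" by simp
  also have "\<dots> \<le> 12 * Mc b"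
  proof (cases "\<bar>b\<bar> \<le> 1")
    case True
    then show ?thesis by (simp add: Mc_def min_le_iff_disj)
  next
    case False
    then show ?thesis using Mc_lower[of b] by (simp add: min_le_iff_disj)
  qed
  finally have "b * (dMc z - dMc a) \<le> 12 * Mc b" .
  then show ?thesis using z(1) by (simp add: algebra_simps)
qed

text \<open>The \<open>\<Delta>\<^sub>2\<close>-type condition \<open>t M'(t) \<le> 2 M(t)\<close>, which says that \<open>M(t)/t\<^sup>2\<close> is nonincreasing on
  \<open>(0,\<infinity>)\<close>, i.e. \<open>M\<close> grows at most quadratically.\<close>

lemma dMc_euler: assumes "0 \<le> x" shows "x * phi \<bar>x\<bar> \<le> dMc x"
proof (cases "x \<le> 1")
  case True then show ?thesis using assms by (simp add: dMc_def phi_def)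
next
  case False
  have "0 \<le> (x - 1) * (6 * x + 2)" using False by simp
  then have "8 * (1 + x) + 8 * x \<le> 6 * (1 + x)^2" by (simp add: power2_eq_square algebra_simps)
  then have "(8 * (1 + x) + 8 * x) / (1 + x)^2 \<le> 6" using False by (simp add: divide_le_eq)
  moreover have "(8 * (1 + x) + 8 * x) / (1 + x)^2 = 8 / (1 + x) + 8 * x / (1 + x)^2"
    using False by (simp add: divide_simps power2_eq_square)
  ultimately have "8 * x / (1 + x)^2 \<le> 6 - 8 / (1 + x)" by linarith
  then show ?thesis using False by (simp add: dMc_def phi_def mult.commute)
qed

lemma Mc_sdMc: assumes "0 \<le> s" shows "s * dMc s \<le> 2 * Mc s"
proof -
  define u where "u s = 2 * Mc s - s * dMc s" for s
  have "u 0 \<le> u s"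
  proof (rule DERIV_nonneg_imp_nondecreasing[of 0 s u])
    fix x assume "0 \<le> x" "x \<le> s"
    have "(u has_real_derivative (dMc x - x * phi \<bar>x\<bar>)) (at x)"
      unfolding u_def by (auto intro!: derivative_eq_intros Mc_deriv dMc_deriv)
    moreover have "0 \<le> dMc x - x * phi \<bar>x\<bar>" using dMc_euler \<open>0 \<le> x\<close> by simp
    ultimately show "\<exists>y. DERIV u x :> y \<and> 0 \<le> y" by blast
  qed (use assms in simp)
  then show ?thesis by (simp add: u_def)
qed

lemma Mc_ratio_antimono:
  assumes "0 < a" "a \<le> b"
  shows "Mc b / b^2 \<le> Mc a / a^2"
proof (rule DERIV_nonpos_imp_nonincreasing[of a b "\<lambda>s. Mc s / s^2"])
  fix x assume "a \<le> x" "x \<le> b"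
  then have x: "0 < x" using assms by simp
  have "((\<lambda>s. Mc s / s^2) has_real_derivative x * (x * dMc x - 2 * Mc x) / (x^2)^2) (at x)"
    using x by (auto intro!: derivative_eq_intros Mc_deriv simp: power2_eq_square algebra_simps)
  moreover have "x * (x * dMc x - 2 * Mc x) / (x^2)^2 \<le> 0"
    using Mc_sdMc[of x] x by (intro divide_nonpos_pos mult_nonneg_nonpos) auto
  ultimately show "\<exists>y. ((\<lambda>s. Mc s / s^2) has_real_derivative y) (at x) \<and> y \<le> 0" by blast
qed (use assms in simp)

lemma Mc_quadratic_growth:
  assumes "1 \<le> k"
  shows "Mc (k * t) \<le> k^2 * Mc t"
proof (cases "t = 0")
  case False
  then have "Mc (k * \<bar>t\<bar>) / (k * \<bar>t\<bar>)^2 \<le> Mc \<bar>t\<bar> / \<bar>t\<bar>^2"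
    using assms by (intro Mc_ratio_antimono) auto
  moreover have "Mc (k * \<bar>t\<bar>) = Mc (k * t)" using assms
    by (metis Mc_abs abs_mult abs_of_nonneg order_trans zero_le_one)
  ultimately have "Mc (k * t) / (k^2 * t^2) \<le> Mc t / t^2" by (simp add: Mc_abs power_mult_distrib)
  moreover have "0 < k^2 * t^2" using False assms by simp
  ultimately show ?thesis using False by (simp add: divide_le_eq field_simps)
qed simp

lemma Mc_scaled_upper:
  assumes "0 \<le> lam"
  shows "Mc (lam * t) \<le> max 1 (lam^2) * Mc t"
proof (cases "1 \<le> lam")
  case True
  then show ?thesis using Mc_quadratic_growth[OF True, of t] Mc_nonneg[of t]
    by (metis max.cobounded2 mult_right_mono order_trans)
next
  case False
  then have "Mc (lam * t) \<le> Mc t" using assms by (intro Mc_mono_abs) (simp add: abs_mult mult_left_le_one_le)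
  then show ?thesis using Mc_nonneg[of t] by (metis max.cobounded1 mult_1 mult_right_mono order_trans)
qed

lemma Mc_scaled_lower:
  assumes "0 < tau"
  shows "min tau (tau^2) * Mc t \<le> Mc (tau * t)"
proof (cases "1 \<le> tau")
  case True
  have "Mc ((1 / tau) * (tau * t) + (1 - 1 / tau) * 0) \<le> (1 / tau) * Mc (tau * t) + (1 - 1 / tau) * Mc 0"
    using True by (intro Mc_convex) auto
  then have "tau * Mc t \<le> Mc (tau * t)" using assms by (simp add: field_simps)
  moreover have "tau \<le> tau^2" using True by (simp add: power2_eq_square)
  ultimately show ?thesis by (simp add: min_absorb1)
next
  case False
  have "Mc ((1 / tau) * (tau * t)) \<le> (1 / tau)^2 * Mc (tau * t)"
    using False assms by (intro Mc_quadratic_growth) simp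
  then have "tau^2 * Mc t \<le> Mc (tau * t)" using assms by (simp add: field_simps power2_eq_square)
  moreover have "tau^2 \<le> tau" using False assms by (simp add: power2_eq_square mult_left_le)
  ultimately show ?thesis by (simp add: min_absorb2)
qed

text \<open>The pointwise estimate behind the first-order bound for the norm: perturbing \<open>a\<close> in
  direction \<open>\<tau>b\<close> and rescaling by \<open>1 + \<sigma>\<close> with \<open>|\<sigma>| \<le> 2\<tau>\<close> costs, beyond the linear term,
  at most a multiple of \<open>M(\<tau>a) + M(\<tau>b)\<close>.\<close>

lemma Mc_combination_bound:
  assumes "0 < lam" "lam \<le> 3" "\<bar>sig\<bar> \<le> 2 * tau"
  shows "Mc ((tau * b - sig * a) / lam) \<le> 3 / lam^2 * Mc (tau * b) + 6 / lam^2 * Mc (tau * a)"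
proof -
  have k: "1 \<le> 3 / lam" using assms by (simp add: le_divide_eq)
  have split: "(tau * b - sig * a) / lam
      = (1/3) * (3 / lam * (tau * b)) + (1 - 1/3) * (- (3 * sig * a / (2 * lam)))"
    using assms(1) by (simp add: field_simps)
  have "\<bar>- (3 * sig * a / (2 * lam))\<bar> = 3 * \<bar>sig\<bar> * \<bar>a\<bar> / (2 * lam)"
    using assms(1) by (simp add: abs_mult abs_divide)
  also have "\<dots> \<le> 3 * (2 * tau) * \<bar>a\<bar> / (2 * lam)"
    using assms by (intro divide_right_mono mult_right_mono) auto
  also have "\<dots> = \<bar>3 / lam * (tau * a)\<bar>"
    using assms by (simp add: abs_mult abs_divide)
  finally have second: "Mc (- (3 * sig * a / (2 * lam))) \<le> (3 / lam)^2 * Mc (tau * a)"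
    using Mc_mono_abs Mc_quadratic_growth[OF k, of "tau * a"] by (meson order_trans)
  have first: "Mc (3 / lam * (tau * b)) \<le> (3 / lam)^2 * Mc (tau * b)"
    using k by (rule Mc_quadratic_growth)
  have "Mc ((tau * b - sig * a) / lam)
      \<le> (1/3) * Mc (3 / lam * (tau * b)) + (1 - 1/3) * Mc (- (3 * sig * a / (2 * lam)))"
    unfolding split by (rule Mc_convex) auto
  also have "\<dots> \<le> (1/3) * ((3 / lam)^2 * Mc (tau * b)) + (1 - 1/3) * ((3 / lam)^2 * Mc (tau * a))"
    using first second by (intro add_mono mult_left_mono) auto
  also have "\<dots> = 3 / lam^2 * Mc (tau * b) + 6 / lam^2 * Mc (tau * a)"
    by (simp add: power2_eq_square field_simps)
  finally show ?thesis .
qed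

lemma Mc_perturbation:
  assumes "0 < 1 + sig" "1 + sig \<le> 3" "\<bar>sig\<bar> \<le> 2 * tau"
  shows "Mc ((a + tau * b) / (1 + sig)) \<le> Mc a + (tau / (1 + sig)) * (b * dMc a)
           - (sig / (1 + sig)) * (a * dMc a)
           + 36 / (1 + sig)^2 * Mc (tau * b) + 72 / (1 + sig)^2 * Mc (tau * a)"
proof -
  define lam where "lam = 1 + sig"
  define c where "c = (tau * b - sig * a) / lam"
  have "(a + tau * b) / lam = a + c"
    using assms(1) by (simp add: c_def lam_def field_simps)
  then have "Mc ((a + tau * b) / lam) \<le> Mc a + c * dMc a + 12 * Mc c"
    by (simp add: Mc_remainder)
  moreover have "c * dMc a = (tau / lam) * (b * dMc a) - (sig / lam) * (a * dMc a)"
    unfolding c_def by (simp add: diff_divide_distrib algebra_simps)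
  moreover have "12 * Mc c \<le> 36 / lam^2 * Mc (tau * b) + 72 / lam^2 * Mc (tau * a)"
    using Mc_combination_bound[of lam sig tau b a] assms by (simp add: c_def lam_def)
  ultimately show ?thesis unfolding lam_def[symmetric] by linarith
qed

definition modular :: "'a measure \<Rightarrow> ('a \<Rightarrow> real) \<Rightarrow> real" where
  "modular mu f = (\<integral> w. Mc (f w) \<partial>mu)"

lemma isCont_Mc: "isCont Mc t"
  using Mc_deriv by (rule DERIV_isCont)

lemma isCont_dMc: "isCont dMc t"
  using dMc_deriv by (rule DERIV_isCont)

lemma borel_measurable_Mc [measurable]:
  "g \<in> borel_measurable M \<Longrightarrow> (\<lambda>w. Mc (g w)) \<in> borel_measurable M"
  by (rule borel_measurable_continuous_on[OF continuous_at_imp_continuous_on]) (use isCont_Mc in auto)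

lemma borel_measurable_dMc [measurable]:
  "g \<in> borel_measurable M \<Longrightarrow> (\<lambda>w. dMc (g w)) \<in> borel_measurable M"
  by (rule borel_measurable_continuous_on[OF continuous_at_imp_continuous_on]) (use isCont_dMc in auto)

lemma integrable_Mc:
  assumes "integrable M g" shows "integrable M (\<lambda>w. Mc (g w))"
proof (rule Bochner_Integration.integrable_bound[where f = "\<lambda>w. 6 * \<bar>g w\<bar>"])
  show "integrable M (\<lambda>w. 6 * \<bar>g w\<bar>)" using assms by simp
  show "(\<lambda>w. Mc (g w)) \<in> borel_measurable M" using assms by measurable
  show "AE w in M. norm (Mc (g w)) \<le> norm (6 * \<bar>g w\<bar>)" using Mc_upper Mc_nonneg by auto
qed

lemma integrable_mult_dMc:
  assumes "integrable M g" "h \<in> borel_measurable M"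
  shows "integrable M (\<lambda>w. g w * dMc (h w))"
proof (rule Bochner_Integration.integrable_bound[where f = "\<lambda>w. 6 * \<bar>g w\<bar>"])
  show "integrable M (\<lambda>w. 6 * \<bar>g w\<bar>)" using assms by simp
  show "(\<lambda>w. g w * dMc (h w)) \<in> borel_measurable M" using assms by measurable
  have "\<bar>g w\<bar> * \<bar>dMc (h w)\<bar> \<le> 6 * \<bar>g w\<bar>" for w
    using mult_left_mono[OF dMc_bound[of "h w"], of "\<bar>g w\<bar>"] by (simp add: mult.commute)
  then show "AE w in M. norm (g w * dMc (h w)) \<le> norm (6 * \<bar>g w\<bar>)" by (simp add: abs_mult)
qed

lemma modular_nonneg: "0 \<le> modular M f"
  unfolding modular_def by (simp add: Mc_nonneg)

lemma modular_scaled_upper: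
  assumes "integrable M f" "0 \<le> lam"
  shows "modular M (\<lambda>w. lam * f w) \<le> max 1 (lam^2) * modular M f"
proof -
  have "modular M (\<lambda>w. lam * f w) \<le> (\<integral> w. max 1 (lam^2) * Mc (f w) \<partial>M)"
    unfolding modular_def using assms Mc_scaled_upper
    by (intro integral_mono integrable_Mc integrable_mult_right) auto
  then show ?thesis unfolding modular_def by simp
qed

lemma modular_scaled_lower:
  assumes "integrable M y" "0 < tau"
  shows "min tau (tau^2) * modular M y \<le> modular M (\<lambda>w. tau * y w)"
proof -
  have "min tau (tau^2) * modular M y = (\<integral> w. min tau (tau^2) * Mc (y w) \<partial>M)"
    by (simp add: modular_def)
  also have "\<dots> \<le> modular M (\<lambda>w. tau * y w)"
    unfolding modular_def using assms Mc_scaled_lower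
    by (intro integral_mono integrable_Mc integrable_mult_right) auto
  finally show ?thesis .
qed

lemma modular_convex:
  assumes "integrable M x" "integrable M y" "0 \<le> th" "th \<le> 1"
  shows "modular M (\<lambda>w. th * x w + (1 - th) * y w) \<le> th * modular M x + (1 - th) * modular M y"
proof -
  have "modular M (\<lambda>w. th * x w + (1 - th) * y w) \<le> (\<integral> w. th * Mc (x w) + (1 - th) * Mc (y w) \<partial>M)"
    unfolding modular_def using assms Mc_convex
    by (intro integral_mono integrable_Mc) (auto simp: integrable_Mc)
  also have "\<dots> = th * modular M x + (1 - th) * modular M y"
    unfolding modular_def using assms by (simp add: integrable_Mc)
  finally show ?thesis .
qed

lemma lux_norm_modular:
  assumes "integrable M f"
  shows "lux_norm M f = Inf {lam. 0 < lam \<and> modular M (\<lambda>w. f w / lam) \<le> 1}"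
proof -
  have "(\<integral>\<^sup>+ w. ennreal (orliczM (f w / lam)) \<partial>M) = ennreal (modular M (\<lambda>w. f w / lam))" for lam
    unfolding orliczM_eq_Mc modular_def using assms
    by (intro nn_integral_eq_integral integrable_Mc) (auto simp: Mc_nonneg)
  then show ?thesis unfolding lux_norm_def by (simp add: ennreal_le_1)
qed

lemma lux_norm_le:
  assumes "integrable M f" "0 < lam" "modular M (\<lambda>w. f w / lam) \<le> 1"
  shows "lux_norm M f \<le> lam"
  unfolding lux_norm_modular[OF assms(1)]
  by (rule cInf_lower) (use assms in \<open>auto intro: bdd_belowI[of _ 0]\<close>)

text \<open>On a probability space every integrable function has finite Luxemburg norm, so the
  infimum defining it is approached by admissible scalings.\<close>

lemma lux_norm_less_obtain:
  assumes "prob_space M" "integrable M f" "lux_norm M f < c"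
  obtains lam where "0 < lam" "lam < c" "modular M (\<lambda>w. f w / lam) \<le> 1"
proof -
  interpret prob_space M by fact
  define A where "A = {lam. 0 < lam \<and> modular M (\<lambda>w. f w / lam) \<le> 1}"
  define lam0 where "lam0 = 6 * (\<integral> w. \<bar>f w\<bar> \<partial>M) + 1"
  have pos: "0 < lam0" unfolding lam0_def by (simp add: add_nonneg_pos)
  have "Mc (f w / lam0) \<le> 6 * \<bar>f w\<bar> / lam0" for w
    using Mc_upper[of "f w / lam0"] pos by (simp add: abs_divide)
  then have "modular M (\<lambda>w. f w / lam0) \<le> (\<integral> w. 6 * \<bar>f w\<bar> / lam0 \<partial>M)"
    unfolding modular_def
    by (intro integral_mono integrable_Mc) (use assms(2) in simp_all)
  also have "\<dots> \<le> 1" using pos by (simp add: lam0_def)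
  finally have "lam0 \<in> A" using pos by (simp add: A_def)
  moreover have "Inf A < c" using assms(3) unfolding lux_norm_modular[OF assms(2)] A_def .
  ultimately obtain lam where "lam \<in> A" "lam < c" using cInf_lessD[of A c] by blast
  then show ?thesis using that unfolding A_def by blast
qed

lemma modular_le_1_if_lux_norm_le_1:
  assumes "prob_space M" "integrable M f" "lux_norm M f \<le> 1"
  shows "modular M f \<le> 1"
proof (rule ccontr)
  define I where "I = modular M f"
  assume "\<not> modular M f \<le> 1"
  then have "1 < I" by (simp add: I_def)
  define d where "d = min 1 ((I - 1) / 3)"
  have "d \<le> (I - 1) / 3" unfolding d_def by (rule min.cobounded2)
  then have d: "0 < d" "d \<le> 1" "3 * d \<le> I - 1" using \<open>1 < I\<close> by (auto simp: d_def)
  have "lux_norm M f < 1 + d" using assms(3) d(1) by simp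
  then obtain lam where lam: "0 < lam" "lam < 1 + d" and mod_lam: "modular M (\<lambda>w. f w / lam) \<le> 1"
    by (rule lux_norm_less_obtain[OF assms(1,2)])
  have "I = modular M (\<lambda>w. lam * (f w / lam))" using lam(1) by (simp add: I_def)
  also have "\<dots> \<le> max 1 (lam^2) * modular M (\<lambda>w. f w / lam)"
    using assms(2) lam(1) by (intro modular_scaled_upper) auto
  also have "\<dots> \<le> max 1 (lam^2)" using mod_lam by (simp add: mult_left_le)
  also have "\<dots> < I"
  proof -
    have "lam^2 < (1 + d)^2" using lam by (intro power_strict_mono) auto
    also have "\<dots> \<le> 1 + 3 * d" using d by (simp add: power2_eq_square algebra_simps mult_left_le)
    finally show ?thesis using d \<open>1 < I\<close> by simp
  qed
  finally show False by simp
qed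

lemma modular_ge_1_if_lux_norm_ge_1:
  assumes "integrable M f" "1 \<le> lux_norm M f"
  shows "1 \<le> modular M f"
proof (rule ccontr)
  define I where "I = modular M f"
  assume "\<not> 1 \<le> modular M f"
  then have "I < 1" by (simp add: I_def)
  define lam where "lam = (1 + I) / 2"
  have lam: "0 < lam" "lam < 1" using \<open>I < 1\<close> modular_nonneg[of M f] by (auto simp: lam_def I_def)
  have "I \<le> lam^2"
    using zero_le_power2[of "1 - I"] by (simp add: lam_def power2_eq_square field_simps)
  have "modular M (\<lambda>w. f w / lam) = modular M (\<lambda>w. (1 / lam) * f w)" by simp
  also have "\<dots> \<le> max 1 ((1 / lam)^2) * I"
    unfolding I_def using assms(1) lam by (intro modular_scaled_upper) auto
  also have "\<dots> = I / lam^2"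
  proof -
    have "lam^2 \<le> 1" using lam by (simp add: power_le_one)
    then have "1 \<le> (1 / lam)^2" using lam by (simp add: power_divide)
    then show ?thesis by (simp add: max_absorb2 power_divide)
  qed
  also have "\<dots> \<le> 1" using \<open>I \<le> lam^2\<close> lam by simp
  finally have "lux_norm M f \<le> lam" by (rule lux_norm_le[OF assms(1) lam(1)])
  then show False using lam assms(2) by simp
qed

lemma modular_eq_1_if_lux_norm_eq_1:
  assumes "prob_space M" "integrable M f" "lux_norm M f = 1"
  shows "modular M f = 1"
  using modular_le_1_if_lux_norm_le_1[OF assms(1,2)] modular_ge_1_if_lux_norm_ge_1[OF assms(2)] assms(3)
  by simp

text \<open>Since \<open>M(t) \<ge> 2|t| - 1\<close>, a function of modular at most one has \<open>L\<^sup>1\<close>-norm at most one;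
  it is nonzero if its modular equals one.\<close>

lemma l1_le_1_if_modular_le_1:
  assumes "prob_space M" "integrable M f" "modular M f \<le> 1"
  shows "(\<integral> w. \<bar>f w\<bar> \<partial>M) \<le> 1"
proof -
  interpret prob_space M by fact
  have "(\<integral> w. 2 * \<bar>f w\<bar> - 1 \<partial>M) \<le> modular M f"
    unfolding modular_def using assms(2) Mc_lower by (intro integral_mono integrable_Mc) auto
  moreover have "(\<integral> w. 2 * \<bar>f w\<bar> - 1 \<partial>M) = 2 * (\<integral> w. \<bar>f w\<bar> \<partial>M) - 1"
    using assms(2) by (simp add: prob_space)
  ultimately show ?thesis using assms(3) by linarith
qed

lemma l1_pos_if_modular_eq_1:
  assumes "integrable M f" "modular M f = 1"
  shows "0 < (\<integral> w. \<bar>f w\<bar> \<partial>M)"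
proof (rule ccontr)
  assume "\<not> ?thesis"
  moreover have "0 \<le> (\<integral> w. \<bar>f w\<bar> \<partial>M)" by simp
  ultimately have "(\<integral> w. \<bar>f w\<bar> \<partial>M) = 0" by simp
  then have "AE w in M. f w = 0"
    using integral_nonneg_eq_0_iff_AE[of M "\<lambda>w. \<bar>f w\<bar>"] assms(1) by simp
  then have "modular M f = (\<integral> w. 0 \<partial>M)"
    unfolding modular_def by (intro integral_cong_AE) (use assms(1) in auto)
  then show False using assms(2) by simp
qed

lemma lux_norm_add_le:
  assumes "integrable M x" "integrable M y" "modular M x \<le> 1" "modular M y \<le> 1" "0 < tau"
  shows "lux_norm M (\<lambda>w. x w + tau * y w) \<le> 1 + tau"
proof (rule lux_norm_le)
  define th where "th = 1 / (1 + tau)"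
  have th: "0 \<le> th" "th \<le> 1" using assms(5) by (auto simp: th_def)
  have "1 - th = tau / (1 + tau)" using assms(5) by (simp add: th_def field_simps)
  then have "(\<lambda>w. (x w + tau * y w) / (1 + tau)) = (\<lambda>w. th * x w + (1 - th) * y w)"
    by (simp add: th_def add_divide_distrib)
  then have "modular M (\<lambda>w. (x w + tau * y w) / (1 + tau)) \<le> th * modular M x + (1 - th) * modular M y"
    using modular_convex[OF assms(1,2) th] by simp
  also have "\<dots> \<le> th * 1 + (1 - th) * 1"
    using assms(3,4) th by (intro add_mono mult_left_mono) auto
  finally show "modular M (\<lambda>w. (x w + tau * y w) / (1 + tau)) \<le> 1" by simp
qed (use assms in auto)

text \<open>\<open>pairing \<mu> x y = \<integral> y M'(x)\<close> is the derivative of the modular at \<open>x\<close> in direction \<open>y\<close>.\<close>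

definition pairing :: "'a measure \<Rightarrow> ('a \<Rightarrow> real) \<Rightarrow> ('a \<Rightarrow> real) \<Rightarrow> real" where
  "pairing mu x y = (\<integral> w. y w * dMc (x w) \<partial>mu)"

lemma integrable_pairing:
  "integrable M x \<Longrightarrow> integrable M y \<Longrightarrow> integrable M (\<lambda>w. y w * dMc (x w))"
  by (intro integrable_mult_dMc borel_measurable_integrable)

lemma modular_le_pairing:
  assumes "integrable M x"
  shows "modular M x \<le> pairing M x x"
  unfolding modular_def pairing_def using assms Mc_tangent[of _ 0]
  by (intro integral_mono integrable_Mc integrable_pairing) auto

text \<open>Young-type inequality from the tangent-line inequality; for \<open>I(y) \<le> I(x)\<close> it gives
  \<open>|pairing x y| \<le> pairing x x\<close>.\<close>

lemma pairing_young:
  assumes "integrable M x" "integrable M y"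
  shows "\<bar>pairing M x y\<bar> \<le> pairing M x x + modular M y - modular M x"
proof -
  have int: "integrable M (\<lambda>w. Mc (y w) - Mc (x w) + x w * dMc (x w))"
    using assms by (simp add: integrable_Mc integrable_pairing)
  have "pairing M x x + modular M y - modular M x = (\<integral> w. Mc (y w) - Mc (x w) + x w * dMc (x w) \<partial>M)"
    using assms by (simp add: pairing_def modular_def integrable_Mc integrable_pairing)
  moreover have "pairing M x y \<le> \<dots>"
    unfolding pairing_def using assms int Mc_tangent[of "x _" "y _"]
    by (intro integral_mono integrable_pairing) (auto simp: algebra_simps)
  moreover have "- pairing M x y \<le> (\<integral> w. Mc (y w) - Mc (x w) + x w * dMc (x w) \<partial>M)"
    unfolding pairing_def integral_minus[symmetric] using assms int Mc_tangent[of "x _" "- y _"]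
    by (intro integral_mono integrable_minus integrable_pairing) (auto simp: algebra_simps)
  ultimately show ?thesis by linarith
qed

text \<open>The first-order bound for the norm near the unit sphere: testing the scaling
  \<open>\<lambda> = 1 + \<tau>L/P + 128s\<close> in the modular with the pointwise perturbation estimate.\<close>

lemma lux_norm_first_order:
  assumes "integrable M x" "integrable M y"
    and "modular M x = 1" "modular M y \<le> 1"
    and "modular M (\<lambda>w. tau * x w) \<le> s" "modular M (\<lambda>w. tau * y w) \<le> s"
    and "0 < tau" "0 \<le> s" "128 * s < tau" "tau < 1 / 128"
  shows "lux_norm M (\<lambda>w. x w + tau * y w) \<le> 1 + tau * pairing M x y / pairing M x x + 128 * s"
proof -
  define P where "P = pairing M x x"
  define L where "L = pairing M x y"
  have P: "1 \<le> P" using modular_le_pairing[OF assms(1)] assms(3) by (simp add: P_def)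
  have "\<bar>L\<bar> \<le> P" using pairing_young[OF assms(1,2)] assms(3,4) by (simp add: P_def L_def)
  then have "\<bar>tau * L / P\<bar> \<le> tau" using P assms(7) by (simp add: abs_mult abs_divide divide_le_eq)
  define sig where "sig = tau * L / P + 128 * s"
  have sig: "\<bar>sig\<bar> \<le> 2 * tau"
    using \<open>\<bar>tau * L / P\<bar> \<le> tau\<close> assms(8,9) abs_triangle_ineq[of "tau * L / P" "128 * s"]
    unfolding sig_def by (simp add: abs_of_nonneg)
  define lam where "lam = 1 + sig"
  have lam: "126 / 128 \<le> lam" "lam \<le> 3" using sig assms(10) by (auto simp: lam_def)
  define r where "r w = Mc (x w) + (tau / lam) * (y w * dMc (x w)) - (sig / lam) * (x w * dMc (x w))
      + 36 / lam^2 * Mc (tau * y w) + 72 / lam^2 * Mc (tau * x w)" for w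
  have int_r: "integrable M r"
    unfolding r_def using assms(1,2) by (simp add: integrable_Mc integrable_pairing)
  have "modular M (\<lambda>w. (x w + tau * y w) / lam) \<le> (\<integral> w. r w \<partial>M)"
    unfolding modular_def r_def lam_def using assms(1,2) lam[unfolded lam_def] sig
    by (intro integral_mono integrable_Mc Mc_perturbation int_r[unfolded r_def lam_def]) auto
  also have "\<dots> = 1 + (tau / lam) * L - (sig / lam) * P
      + 36 / lam^2 * modular M (\<lambda>w. tau * y w) + 72 / lam^2 * modular M (\<lambda>w. tau * x w)"
    unfolding r_def L_def P_def pairing_def modular_def using assms(1,2,3)
    by (simp add: integrable_Mc integrable_pairing modular_def)
  also have "\<dots> \<le> 1 + (tau / lam) * L - (sig / lam) * P + 108 * s / lam^2"
  proof -
    have "36 / lam^2 * modular M (\<lambda>w. tau * y w) + 72 / lam^2 * modular M (\<lambda>w. tau * x w)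
        \<le> 36 / lam^2 * s + 72 / lam^2 * s"
      using assms(5,6) by (intro add_mono mult_left_mono) auto
    then show ?thesis by simp
  qed
  also have "\<dots> = 1 - 128 * s * P / lam + 108 * s / lam^2"
    unfolding sig_def using lam P by (simp add: field_simps power2_eq_square)
  also have "\<dots> \<le> 1"
  proof -
    have "126 / 128 \<le> P * lam" using mult_mono[of 1 P "126 / 128" lam] lam P by simp
    then have "128 * s * (108 / 128) \<le> 128 * s * (P * lam)"
      using assms(8) by (intro mult_left_mono) auto
    then have "108 * s \<le> 128 * s * P * lam" by simp
    then show ?thesis using lam by (simp add: field_simps power2_eq_square)
  qed
  finally have "lux_norm M (\<lambda>w. x w + tau * y w) \<le> lam"
    using lam assms(1,2) by (intro lux_norm_le) auto
  then show ?thesis by (simp add: lam_def sig_def L_def P_def)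
qed

lemma small_scale_if_modular_small:
  assumes "integrable M y" "modular M y = 1" "modular M (\<lambda>w. tau * y w) \<le> s"
    and "0 < tau" "128 * s < tau"
  shows "tau < 1 / 128"
proof -
  have "min tau (tau^2) < tau / 128"
    using modular_scaled_lower[OF assms(1,4)] assms(2,3,5) by simp
  moreover have "\<not> tau < tau / 128" using assms(4) by simp
  ultimately have "tau * tau < tau * (1 / 128)"
    by (simp add: min_less_iff_disj power2_eq_square)
  then show ?thesis using assms(4) by simp
qed

text \<open>The modulus-of-smoothness expression for a single pair on the unit sphere: the two
  first-order bounds for \<open>\<plusminus>y\<close> cancel in the linear term; for large \<open>\<tau>\<close> the crude bound is used.\<close>

lemma modulus_pair_bound:
  assumes "integrable M x" "integrable M y"
    and "modular M x = 1" "modular M y = 1"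
    and "modular M (\<lambda>w. tau * x w) \<le> s" "modular M (\<lambda>w. tau * y w) \<le> s" "0 < tau"
  shows "(lux_norm M (\<lambda>w. x w + tau * y w) + lux_norm M (\<lambda>w. x w - tau * y w)) / 2 - 1 \<le> 128 * s"
proof -
  have minus_y: "integrable M (\<lambda>w. - y w)" "modular M (\<lambda>w. - y w) = 1"
      "modular M (\<lambda>w. tau * - y w) \<le> s"
    using assms(2,4,6) by (simp_all add: modular_def)
  have minus_eq: "(\<lambda>w. x w - tau * y w) = (\<lambda>w. x w + tau * - y w)" by simp
  have "0 \<le> s" using modular_nonneg[of M "\<lambda>w. tau * y w"] assms(6) by linarith
  show ?thesis
  proof (cases "tau \<le> 128 * s")
    case True
    have "lux_norm M (\<lambda>w. x w + tau * y w) \<le> 1 + tau"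
      using assms by (intro lux_norm_add_le) auto
    moreover have "lux_norm M (\<lambda>w. x w - tau * y w) \<le> 1 + tau"
      unfolding minus_eq using assms minus_y by (intro lux_norm_add_le) auto
    moreover have "(A + B) / 2 - 1 \<le> 128 * s" if "A \<le> 1 + tau" "B \<le> 1 + tau" for A B :: real
      using that True by (simp add: field_simps)
    ultimately show ?thesis by blast
  next
    case False
    define q where "q = tau * pairing M x y / pairing M x x"
    have "tau < 1 / 128" using small_scale_if_modular_small[OF assms(2,4,6,7)] False by simp
    have "lux_norm M (\<lambda>w. x w + tau * y w) \<le> 1 + q + 128 * s"
      unfolding q_def
      by (rule lux_norm_first_order[OF assms(1-3) _ assms(5-7) \<open>0 \<le> s\<close> _ \<open>tau < 1 / 128\<close>])
        (use assms(4) False in simp_all)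
    moreover have "lux_norm M (\<lambda>w. x w - tau * y w)
        \<le> 1 + tau * pairing M x (\<lambda>w. - y w) / pairing M x x + 128 * s"
      unfolding minus_eq by (rule lux_norm_first_order[OF assms(1) minus_y(1) assms(3) _ assms(5) minus_y(3) assms(7)
            \<open>0 \<le> s\<close> _ \<open>tau < 1 / 128\<close>])
        (use minus_y(2) False in simp_all)
    moreover have "tau * pairing M x (\<lambda>w. - y w) / pairing M x x = - q"
      by (simp add: pairing_def q_def)
    moreover have "(A + B) / 2 - 1 \<le> 128 * s"
      if "A \<le> 1 + q + 128 * s" "B \<le> 1 + - q + 128 * s" for A B :: real
      using that by (simp add: field_simps)
    ultimately show ?thesis by simp
  qed
qed

text \<open>Normalising a modular-one function in \<open>L\<^sup>1\<close> multiplies it by a factor \<open>\<ge> 1\<close>, so the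
  modular of \<open>\<tau>\<close> times it can only grow; in a closed subspace the normalised function stays in
  the subspace and is admissible for the supremum in the statement.\<close>

lemma modular_le_normalized:
  assumes "prob_space M" "integrable M f" "modular M f = 1" "0 < tau"
  defines "g \<equiv> \<lambda>w. (1 / l1_norm M f) * f w"
  shows "l1_norm M g = 1" "modular M (\<lambda>w. tau * f w) \<le> modular M (\<lambda>w. tau * g w)"
proof -
  have pos: "0 < l1_norm M f" unfolding l1_norm_def by (rule l1_pos_if_modular_eq_1[OF assms(2,3)])
  have le1: "l1_norm M f \<le> 1"
    unfolding l1_norm_def using assms(1-3) by (intro l1_le_1_if_modular_le_1) auto
  show "l1_norm M g = 1" using pos by (simp add: g_def l1_norm_def abs_mult)
  have "\<bar>tau * f w\<bar> \<le> \<bar>tau * g w\<bar>" for w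
  proof -
    have "\<bar>f w\<bar> * 1 \<le> \<bar>f w\<bar> * (1 / l1_norm M f)" using pos le1 by (intro mult_left_mono) auto
    then have "tau * \<bar>f w\<bar> \<le> tau * (\<bar>f w\<bar> * (1 / l1_norm M f))"
      using assms(4) by (intro mult_left_mono) auto
    then show ?thesis using assms(4) pos by (simp add: g_def abs_mult)
  qed
  then show "modular M (\<lambda>w. tau * f w) \<le> modular M (\<lambda>w. tau * g w)"
    unfolding modular_def using assms(2) Mc_mono_abs
    by (intro integral_mono integrable_Mc) (auto simp: g_def)
qed

lemma modular_le_SUP_normalized:
  assumes "prob_space M" "closed_L1_subspace M X" "f \<in> X" "modular M f = 1" "0 < tau"
  shows "ereal (modular M (\<lambda>w. tau * f w))
           \<le> (SUP g \<in> {g \<in> X. l1_norm M g = 1}. ereal (\<integral> w. orliczM (tau * g w) \<partial>M))"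
proof -
  have int: "integrable M f" using assms(2,3) by (simp add: closed_L1_subspace_def)
  define g where "g = (\<lambda>w. (1 / l1_norm M f) * f w)"
  have "g \<in> X" using assms(2,3) unfolding closed_L1_subspace_def g_def by blast
  moreover have "l1_norm M g = 1" "modular M (\<lambda>w. tau * f w) \<le> modular M (\<lambda>w. tau * g w)"
    using modular_le_normalized[OF assms(1) int assms(4,5)] by (simp_all add: g_def)
  ultimately show ?thesis
    by (intro SUP_upper2[of g]) (auto simp: modular_def orliczM_eq_Mc)
qed

theorem mainTheorem11:
  fixes mu :: "'a measure" and X :: "('a \<Rightarrow> real) set" and tau :: real
  assumes "prob_space mu"
    and "closed_L1_subspace mu X"
    and "tau > 0"
  shows "mod_smooth mu X tau
           \<le> 128 * (SUP g \<in> {g \<in> X. l1_norm mu g = 1}. ereal (\<integral> w. orliczM (tau * g w) \<partial>mu))"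
  unfolding mod_smooth_def
proof (rule SUP_least, clarify)
  define S where "S = (SUP g \<in> {g \<in> X. l1_norm mu g = 1}. ereal (\<integral> w. orliczM (tau * g w) \<partial>mu))"
  fix x y assume "x \<in> X" "y \<in> X" "lux_norm mu x = 1" "lux_norm mu y = 1"
  then have int: "integrable mu x" "integrable mu y"
    using assms(2) by (auto simp: closed_L1_subspace_def)
  have unit: "modular mu x = 1" "modular mu y = 1"
    using modular_eq_1_if_lux_norm_eq_1 assms(1) int \<open>lux_norm mu x = 1\<close> \<open>lux_norm mu y = 1\<close> by auto
  define s where "s = max (modular mu (\<lambda>w. tau * x w)) (modular mu (\<lambda>w. tau * y w))"
  have "(lux_norm mu (\<lambda>w. x w + tau * y w) + lux_norm mu (\<lambda>w. x w - tau * y w)) / 2 - 1 \<le> 128 * s"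
    by (rule modulus_pair_bound[OF int unit _ _ assms(3)]) (simp_all add: s_def)
  moreover have "ereal s \<le> S"
    unfolding s_def S_def using modular_le_SUP_normalized[OF assms(1,2) _ _ assms(3)] unit \<open>x \<in> X\<close> \<open>y \<in> X\<close>
    by (simp add: max_def)
  then have "128 * ereal s \<le> 128 * S" by (rule ereal_mult_left_mono) simp
  ultimately show "ereal ((lux_norm mu (\<lambda>w. fst (x, y) w + tau * snd (x, y) w)
      + lux_norm mu (\<lambda>w. fst (x, y) w - tau * snd (x, y) w)) / 2 - 1) \<le> 128 * S"
    by (simp add: order_trans[of _ "ereal (128 * s)"])
qed

end
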